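(* Let $\Omega$ be a compact Hausdorff space and let $\Gamma$ be a group acting minimally on $\Omega$ by homeomorphisms. Suppose that some element $g\in\Gamma$ has an attracting fixed point in $\Omega$. Then there is an integer $n$ such that for any nonempty open subsets $U_1,\dots,U_n$ of $\Omega$ there exist $t_1,\dots,t_n\in\Gamma$ with $t_1U_1\cup\dots\cup t_nU_n=\Omega$ (i.e. the action is $n$-filling).
   Context: An element $g\in\Gamma$ has an attracting fixed point $x\in\Omega$ if $gx=x$ and there exists a neighbourhood $V_x$ of $x$ such that $\lim_{n\to\infty}g^n(V_x)=\{x\}$ (i.e. for every neighbourhood $W$ of $x$, $g^n(V_x)\subset W$ for all sufficiently large $n$). *)

theory Defs
  imports "HOL-Analysis.Analysis" "HOL-Algebra.Group_Action"
begin

definition homeo_action :: "('g, 'c) monoid_scheme \<Rightarrow> 'a topology \<Rightarrow> ('g \<Rightarrow> 'a \<Rightarrow> 'a) \<Rightarrow> bool" where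
  "homeo_action G X \<phi> \<longleftrightarrow> group_action G (topspace X) \<phi> \<and>
     (\<forall>g \<in> carrier G. homeomorphic_map X X (\<phi> g))"

definition minimal_action :: "('g, 'c) monoid_scheme \<Rightarrow> 'a topology \<Rightarrow> ('g \<Rightarrow> 'a \<Rightarrow> 'a) \<Rightarrow> bool" where
  "minimal_action G X \<phi> \<longleftrightarrow>
     (\<forall>x \<in> topspace X. X closure_of (orbit G \<phi> x) = topspace X)"

definition attracting_fixed_point ::
    "('g, 'c) monoid_scheme \<Rightarrow> 'a topology \<Rightarrow> ('g \<Rightarrow> 'a \<Rightarrow> 'a) \<Rightarrow> 'g \<Rightarrow> 'a \<Rightarrow> bool" where
  "attracting_fixed_point G X \<phi> g x \<longleftrightarrow>
     x \<in> topspace X \<and> \<phi> g x = x \<and>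
     (\<exists>V. openin X V \<and> x \<in> V \<and>
        (\<forall>W. openin X W \<and> x \<in> W \<longrightarrow>
           (\<exists>N. \<forall>n\<ge>N. \<phi> (g [^]\<^bsub>G\<^esub> (n::nat)) ` V \<subseteq> W)))"

definition n_filling :: "('g, 'c) monoid_scheme \<Rightarrow> 'a topology \<Rightarrow> ('g \<Rightarrow> 'a \<Rightarrow> 'a) \<Rightarrow> nat \<Rightarrow> bool" where
  "n_filling G X \<phi> n \<longleftrightarrow>
     (\<forall>U :: nat \<Rightarrow> 'a set. (\<forall>i<n. openin X (U i) \<and> U i \<noteq> {}) \<longrightarrow>
        (\<exists>t. (\<forall>i<n. t i \<in> carrier G) \<and> (\<Union>i<n. \<phi> (t i) ` U i) = topspace X))"

end

theory Submission
  imports Defs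
begin

text \<open>Let \<open>V\<close> be a neighbourhood of the attracting fixed point \<open>x\<close> of \<open>g\<close>. By minimality
  every nonempty open \<open>U\<close> has a translate \<open>a U\<close> containing \<open>x\<close>; since \<open>a U\<close> is open,
  \<open>g\<^sup>N V \<subseteq> a U\<close> for large \<open>N\<close>, i.e. \<open>V \<subseteq> g\<^sup>-\<^sup>N a U\<close>. Again by minimality the translates of
  \<open>V\<close> cover \<open>\<Omega>\<close>, so by compactness finitely many of them, \<open>k\<^sub>1 V, \<dots>, k\<^sub>n V\<close>, do.
  Given \<open>U\<^sub>1, \<dots>, U\<^sub>n\<close>, choose \<open>s\<^sub>i\<close> with \<open>V \<subseteq> s\<^sub>i U\<^sub>i\<close>; then the sets \<open>k\<^sub>i s\<^sub>i U\<^sub>i\<close> cover \<open>\<Omega>\<close>.\<close>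

lemma (in group_action) image_image_mult:
  assumes "U \<subseteq> E" "a \<in> carrier G" "b \<in> carrier G"
  shows "\<phi> a ` \<phi> b ` U = \<phi> (a \<otimes> b) ` U"
  unfolding image_image by (rule image_cong) (use assms composition_rule in auto)

lemma (in group_action) image_inv_image:
  assumes "U \<subseteq> E" "a \<in> carrier G"
  shows "\<phi> (inv a) ` \<phi> a ` U = U"
proof -
  have "\<phi> (inv a) ` \<phi> a ` U = (\<lambda>u. u) ` U"
    unfolding image_image by (rule image_cong) (use assms orbit_sym_aux in auto)
  then show ?thesis
    by simp
qed

lemma homeo_action_openin_image:
  assumes "homeo_action G X \<phi>" "h \<in> carrier G" "openin X U"
  shows "openin X (\<phi> h ` U)"
  using assms homeomorphic_imp_open_map unfolding homeo_action_def open_map_def by blast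

lemma minimal_action_translate_of_open_contains:
  fixes G (structure)
  assumes "homeo_action G X \<phi>" "minimal_action G X \<phi>" "y \<in> topspace X"
    and "openin X U" "U \<noteq> {}"
  obtains h where "h \<in> carrier G" "y \<in> \<phi> h ` U"
proof -
  interpret group_action G "topspace X" \<phi>
    using assms(1) by (simp add: homeo_action_def)
  interpret group G
    using group_hom group_hom.axioms(1) by blast
  have "U \<inter> X closure_of (orbit G \<phi> y) \<noteq> {}"
    using assms(2,3,5) openin_subset[OF assms(4)] by (simp add: minimal_action_def Int_absorb2)
  then obtain a where a: "a \<in> carrier G" "\<phi> a y \<in> U"
    unfolding openin_Int_closure_of_eq_empty[OF assms(4)] orbit_def by blast
  show thesis
  proof (rule that)
    show "inv a \<in> carrier G"
      using a(1) by simp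
    show "y \<in> \<phi> (inv a) ` U"
      using orbit_sym_aux[OF a(1) assms(3) refl] a(2) by (metis image_eqI)
  qed
qed

lemma minimal_action_finitely_many_translates_cover:
  assumes "compact_space X" "homeo_action G X \<phi>" "minimal_action G X \<phi>"
    and "openin X V" "V \<noteq> {}"
  obtains n :: nat and k where "\<forall>i<n. k i \<in> carrier G" "topspace X \<subseteq> (\<Union>i<n. \<phi> (k i) ` V)"
proof -
  let ?translates = "(\<lambda>h. \<phi> h ` V) ` carrier G"
  have cover: "topspace X \<subseteq> \<Union>?translates"
    using minimal_action_translate_of_open_contains[OF assms(2,3) _ assms(4,5)] by blast
  have "\<exists>F. finite F \<and> F \<subseteq> ?translates \<and> topspace X \<subseteq> \<Union>F"
  proof (rule compactinD[OF assms(1)[unfolded compact_space_def] _ cover])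
    show "openin X W" if "W \<in> ?translates" for W
      using that homeo_action_openin_image[OF assms(2) _ assms(4)] by blast
  qed
  then obtain F where F: "finite F" "F \<subseteq> ?translates" "topspace X \<subseteq> \<Union>F"
    by blast
  obtain K where K: "K \<subseteq> carrier G" "finite K" "F = (\<lambda>h. \<phi> h ` V) ` K"
    using finite_subset_image[OF F(1,2)] by blast
  obtain n :: nat and k where nk: "K = k ` {..<n}"
    using finite_imp_nat_seg_image_inj_on[OF K(2)] unfolding lessThan_def by blast
  show thesis
  proof
    show "\<forall>i<n. k i \<in> carrier G"
      using K(1) nk by auto
    show "topspace X \<subseteq> (\<Union>i<n. \<phi> (k i) ` V)"
      using F(3) by (simp add: K(3) nk image_image)
  qed
qed

lemma attracting_fixed_point_neighbourhood_in_translates: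
  fixes G (structure)
  assumes "homeo_action G X \<phi>" "minimal_action G X \<phi>"
    and "g \<in> carrier G" "attracting_fixed_point G X \<phi> g x"
  obtains V where "openin X V" "x \<in> V"
    "\<And>U. openin X U \<Longrightarrow> U \<noteq> {} \<Longrightarrow> \<exists>t\<in>carrier G. V \<subseteq> \<phi> t ` U"
proof -
  interpret group_action G "topspace X" \<phi>
    using assms(1) by (simp add: homeo_action_def)
  interpret group G
    using group_hom group_hom.axioms(1) by auto
  obtain V where V: "openin X V" "x \<in> V" "x \<in> topspace X"
    and attract: "\<And>W. openin X W \<Longrightarrow> x \<in> W \<Longrightarrow> \<exists>N. \<forall>n\<ge>N. \<phi> (g [^] (n::nat)) ` V \<subseteq> W"
    using assms(4) unfolding attracting_fixed_point_def by metis
  have absorb: "\<exists>t\<in>carrier G. V \<subseteq> \<phi> t ` U" if U: "openin X U" "U \<noteq> {}" for U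
  proof -
    obtain a where a: "a \<in> carrier G" "x \<in> \<phi> a ` U"
      using minimal_action_translate_of_open_contains[OF assms(1,2) V(3) U] .
    obtain N :: nat where N: "\<phi> (g [^] N) ` V \<subseteq> \<phi> a ` U"
      using attract[OF homeo_action_openin_image[OF assms(1) a(1) U(1)] a(2)] by blast
    have gN: "g [^] N \<in> carrier G"
      using assms(3) by simp
    have "V = \<phi> (inv (g [^] N)) ` \<phi> (g [^] N) ` V"
      using image_inv_image[OF openin_subset[OF V(1)] gN] by simp
    also have "\<dots> \<subseteq> \<phi> (inv (g [^] N)) ` \<phi> a ` U"
      using N by blast
    also have "\<dots> = \<phi> (inv (g [^] N) \<otimes> a) ` U"
      using image_image_mult[OF openin_subset[OF U(1)] inv_closed[OF gN] a(1)] .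
    finally show ?thesis
      using gN a(1) by blast
  qed
  show thesis
    by (rule that[OF V(1,2) absorb])
qed

lemma n_filling_if_translates_cover_and_absorb:
  fixes G (structure)
  assumes "homeo_action G X \<phi>"
    and k: "\<forall>i<n. k i \<in> carrier G" "topspace X \<subseteq> (\<Union>i<n. \<phi> (k i) ` V)"
    and absorb: "\<And>U. openin X U \<Longrightarrow> U \<noteq> {} \<Longrightarrow> \<exists>t\<in>carrier G. V \<subseteq> \<phi> t ` U"
  shows "n_filling G X \<phi> n"
  unfolding n_filling_def
proof (intro allI impI)
  interpret group_action G "topspace X" \<phi>
    using assms(1) by (simp add: homeo_action_def)
  interpret group G
    using group_hom group_hom.axioms(1) by auto
  fix U :: "nat \<Rightarrow> _ set"
  assume U: "\<forall>i<n. openin X (U i) \<and> U i \<noteq> {}"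
  then have U_sub: "U i \<subseteq> topspace X" if "i < n" for i
    using openin_subset[of X "U i"] that by simp
  have "\<exists>s. s \<in> carrier G \<and> V \<subseteq> \<phi> s ` U i" if "i < n" for i
    using absorb[of "U i"] U that by blast
  then obtain s where s: "\<And>i. i < n \<Longrightarrow> s i \<in> carrier G \<and> V \<subseteq> \<phi> (s i) ` U i"
    by metis
  let ?t = "\<lambda>i. k i \<otimes> s i"
  have t: "?t i \<in> carrier G" if "i < n" for i
    using k(1) s that by simp
  have "\<phi> (k i) ` V \<subseteq> \<phi> (?t i) ` U i" if i: "i < n" for i
  proof -
    have "\<phi> (k i) ` V \<subseteq> \<phi> (k i) ` \<phi> (s i) ` U i"
      using s[OF i] by (intro image_mono) simp
    also have "\<dots> = \<phi> (?t i) ` U i"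
      using image_image_mult[OF U_sub[OF i]] k(1) s[OF i] i by simp
    finally show ?thesis .
  qed
  then have "(\<Union>i<n. \<phi> (k i) ` V) \<subseteq> (\<Union>i<n. \<phi> (?t i) ` U i)"
    by (intro UN_mono) auto
  with k(2) have "topspace X \<subseteq> (\<Union>i<n. \<phi> (?t i) ` U i)"
    by (rule order_trans)
  moreover have "\<phi> (?t i) ` U i \<subseteq> topspace X" if "i < n" for i
    using image_mono[OF U_sub[OF that], of "\<phi> (?t i)"] surj_prop[OF t[OF that]] by simp
  then have "(\<Union>i<n. \<phi> (?t i) ` U i) \<subseteq> topspace X"
    by (intro UN_least) auto
  ultimately show "\<exists>t. (\<forall>i<n. t i \<in> carrier G) \<and> (\<Union>i<n. \<phi> (t i) ` U i) = topspace X"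
    using t by (intro exI[of _ ?t]) auto
qed

theorem proposition2p5:
  fixes G :: "('g, 'c) monoid_scheme" and X :: "'a topology" and \<phi> :: "'g \<Rightarrow> 'a \<Rightarrow> 'a"
  assumes "compact_space X" and "Hausdorff_space X"
    and "homeo_action G X \<phi>"
    and "minimal_action G X \<phi>"
    and "g \<in> carrier G" and "attracting_fixed_point G X \<phi> g x"
  shows "\<exists>n::nat. n_filling G X \<phi> n"
proof -
  obtain V where V: "openin X V" "x \<in> V"
    and absorb: "\<And>U. openin X U \<Longrightarrow> U \<noteq> {} \<Longrightarrow> \<exists>t\<in>carrier G. V \<subseteq> \<phi> t ` U"
    using attracting_fixed_point_neighbourhood_in_translates[OF assms(3-6)] by blast
  obtain n :: nat and k where "\<forall>i<n. k i \<in> carrier G" "topspace X \<subseteq> (\<Union>i<n. \<phi> (k i) ` V)"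
    using minimal_action_finitely_many_translates_cover[OF assms(1,3,4) V(1)] V(2) by blast
  then show ?thesis
    using n_filling_if_translates_cover_and_absorb[OF assms(3) _ _ absorb] by blast
qed

end
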